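(* Let $1<p<\infty$, $n\ge 1$, and let $f\in C([0,\infty))$, $g\in C^{0,1}([0,\infty))$ be strictly increasing with $f(0)=g(0)=0$. Let $0<R<\infty$ and let $v=v(r)$ be a solution on $[0,R]$ of $$\operatorname{sign}(v')\big(r^{n-1}|v'|^{p-1}\big)'=r^{n-1}\big(f(v)\pm g(|v'|)\big),\qquad v(0)=v_0>0,\quad v'(0)=0,$$ where the sign $\pm$ is fixed (either $+$ throughout or $-$ throughout). Then for all $r\in(0,R)$: $v(r)>0$, $v'(r)>0$, $v''(r)\ge0$, and $v(r)\le v_0+R\,v'(r)$.
   Context: This ODE is the equation $\Delta_p u=f(u)\pm g(|\nabla u|)$, $\Delta_p u=\operatorname{div}(|\nabla u|^{p-2}\nabla u)$, written for radial functions $u(x)=v(|x|)$. *)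

theory Defs
  imports "HOL-Analysis.Analysis"
begin

text \<open>Radial p-Laplacian flux: r^(n-1) |v'(r)|^(p-2) v'(r).  Its derivative is
  r^(n-1) times the radial p-Laplacian; where v' is nonzero it equals
  sign(v') (r^(n-1) |v'|^(p-1)).\<close>
definition pflux :: "real \<Rightarrow> nat \<Rightarrow> (real \<Rightarrow> real) \<Rightarrow> real \<Rightarrow> real" where
  "pflux p n w r = r ^ (n - 1) * (\<bar>w r\<bar> powr (p - 2) * w r)"

end

theory Submission
  imports Defs
begin

text \<open>Where \<open>v' > 0\<close>, put \<open>W = v'^(p-1)\<close>; the equation becomes
  \<open>W' = f(v) \<plusminus> g(v') - (n-1) W / r\<close>, and \<open>v''\<close> has the sign of \<open>W'\<close>.

  Positivity of \<open>v'\<close>: at \<open>r = 0\<close> and at any zero \<open>c\<close> of \<open>v'\<close> with \<open>v(c) > 0\<close> the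
  right-hand side equals \<open>f(v(c)) > 0\<close>, so the flux \<open>r^(n-1) |v'|^(p-2) v'\<close> increases
  strictly through its zero; hence \<open>v'\<close> turns positive after \<open>0\<close> and cannot have a first zero.

  Convexity: if \<open>W'(t) < 0\<close>, then \<open>W'\<close> is nonnegative somewhere on \<open>(0, t)\<close>
  (otherwise \<open>v'(t) \<le> v'(0) = 0\<close>); let \<open>r\<close> be its last zero before \<open>t\<close>. On \<open>(r, t]\<close>,
  \<open>v'\<close> and \<open>W\<close> decrease while \<open>v\<close> increases. With the minus sign this already gives
  \<open>W'(t) > W'(r) = 0\<close>. With the plus sign and \<open>n \<ge> 2\<close>, the term \<open>-(n-1) W / r\<close> gains
  linearly in \<open>y - r\<close>, whereas the loss in \<open>g(v')\<close> is \<open>o(y - r)\<close> because \<open>g\<close> is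
  Lipschitz and \<open>v''(r) = 0\<close>. With the plus sign and \<open>n = 1\<close>, \<open>W' = f(v) + g(v') > 0\<close>.

  Finally \<open>v(r) \<le> v\<^sub>0 + r v'(r)\<close> is the mean value theorem for nondecreasing \<open>v'\<close>.\<close>

lemma continuous_on_abs_powr_mult:
  assumes "-1 < a"
  shows "continuous_on UNIV (\<lambda>x::real. \<bar>x\<bar> powr a * x)"
proof -
  have "isCont (\<lambda>x::real. \<bar>x\<bar> powr a * x) x0" for x0
  proof (cases "x0 = 0")
    case False
    then show ?thesis by (intro continuous_intros) auto
  next
    case True
    have "((\<lambda>x::real. \<bar>x\<bar> powr (a + 1)) \<longlongrightarrow> \<bar>0\<bar> powr (a + 1)) (at 0)"
      using assms by (intro tendsto_intros) auto
    then have lim: "((\<lambda>x::real. \<bar>x\<bar> powr (a + 1)) \<longlongrightarrow> 0) (at 0)"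
      by simp
    have abs_eq: "\<bar>\<bar>x\<bar> powr a * x\<bar> = \<bar>x\<bar> powr (a + 1)" for x :: real
      by (cases "x = 0") (simp_all add: powr_add abs_mult)
    have "((\<lambda>x::real. \<bar>x\<bar> powr a * x) \<longlongrightarrow> 0) (at 0)"
      by (rule tendsto_rabs_zero_cancel) (use lim in \<open>simp only: abs_eq\<close>)
    then show ?thesis
      using True by (simp add: isCont_def)
  qed
  then show ?thesis
    by (simp add: continuous_at_imp_continuous_on)
qed

lemma continuous_on_pflux:
  assumes "1 < p" "continuous_on S w"
  shows "continuous_on S (pflux p n w)"
proof -
  have "continuous_on S (\<lambda>r. \<bar>w r\<bar> powr (p - 2) * w r)"
    using continuous_on_compose2[OF continuous_on_abs_powr_mult[of "p - 2"] assms(2)] assms(1)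
    by simp
  then show ?thesis
    unfolding pflux_def[abs_def] by (rule continuous_on_mult[OF continuous_on_power[OF continuous_on_id]])
qed

lemma pflux_eq_0: "w r = 0 \<Longrightarrow> pflux p n w r = 0"
  by (simp add: pflux_def)

lemma pflux_pos_iff: "0 < r \<Longrightarrow> 0 < pflux p n w r \<longleftrightarrow> 0 < w r"
  unfolding pflux_def by (cases "w r = 0") (auto simp: zero_less_mult_iff)

lemma pflux_neg_iff: "0 < r \<Longrightarrow> pflux p n w r < 0 \<longleftrightarrow> w r < 0"
  unfolding pflux_def by (cases "w r = 0") (auto simp: mult_less_0_iff)

lemma pflux_eq_powr: "0 < w r \<Longrightarrow> pflux p n w r = r ^ (n - 1) * w r powr (p - 1)"
  unfolding pflux_def by (simp add: powr_add[of "w r" "p - 2" 1, simplified])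

lemma first_zero_real:
  fixes h :: "real \<Rightarrow> real"
  assumes "a \<le> b" "continuous_on {a..b} h" "0 < h a" "h b \<le> 0"
  obtains c where "c \<in> {a<..b}" "h c = 0" "\<And>x. x \<in> {a..<c} \<Longrightarrow> 0 < h x"
proof -
  define Z where "Z = {a..b} \<inter> h -` {..0}"
  have "closed Z"
    unfolding Z_def using assms(2) by (rule continuous_closed_preimage) auto
  moreover have "b \<in> Z" "bdd_below Z"
    unfolding Z_def using assms by auto
  ultimately have "Inf Z \<in> Z"
    by (intro closed_contains_Inf) auto
  define c where "c = Inf Z"
  have c: "c \<in> {a..b}" "h c \<le> 0"
    using \<open>Inf Z \<in> Z\<close> unfolding c_def Z_def by auto
  have pos_before: "0 < h x" if "x \<in> {a..<c}" for x
  proof (rule ccontr)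
    assume "\<not> 0 < h x"
    then have "x \<in> Z"
      using that c unfolding Z_def by auto
    then show False
      using that cInf_lower[OF _ \<open>bdd_below Z\<close>] unfolding c_def by fastforce
  qed
  have "a < c"
    using c assms(3) by (cases "a = c") auto
  have "h c = 0"
  proof (rule ccontr)
    assume "h c \<noteq> 0"
    moreover have "continuous_on {a..c} h"
      using assms(2) c by (auto intro: continuous_on_subset)
    then obtain x where "a \<le> x" "x \<le> c" "h x = 0"
      using IVT2'[of h c 0 a] c \<open>a < c\<close> assms(3) by auto
    ultimately show False
      using pos_before[of x] by (cases "x = c") auto
  qed
  then show ?thesis
    using that \<open>a < c\<close> c pos_before by auto
qed

lemma last_zero_real:
  fixes h :: "real \<Rightarrow> real"
  assumes "a \<le> b" "continuous_on {a..b} h" "0 \<le> h a" "h b < 0"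
  obtains c where "c \<in> {a..<b}" "h c = 0" "\<And>x. x \<in> {c<..b} \<Longrightarrow> h x < 0"
proof -
  have "continuous_on {a..b} (\<lambda>x. h (a + b - x))"
    by (rule continuous_on_compose2[OF assms(2)]) (auto intro!: continuous_intros)
  then have "continuous_on {a..b} (\<lambda>x. - h (a + b - x))"
    by (rule continuous_on_minus)
  then obtain c where c: "c \<in> {a<..b}" "h (a + b - c) = 0"
      and neg: "\<And>x. x \<in> {a..<c} \<Longrightarrow> h (a + b - x) < 0"
    using first_zero_real[of a b "\<lambda>x. - h (a + b - x)"] assms by auto
  show ?thesis
  proof (rule that[of "a + b - c"])
    show "a + b - c \<in> {a..<b}" "h (a + b - c) = 0"
      using c by auto
    show "h x < 0" if "x \<in> {a + b - c<..b}" for x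
      using neg[of "a + b - x"] that by auto
  qed
qed

lemma le_add_mult_if_deriv_le:
  fixes \<phi> \<phi>' :: "real \<Rightarrow> real"
  assumes "a \<le> b" "continuous_on {a..b} \<phi>"
    and "\<And>x. x \<in> {a<..<b} \<Longrightarrow> (\<phi> has_real_derivative \<phi>' x) (at x)"
    and "\<And>x. x \<in> {a<..<b} \<Longrightarrow> \<phi>' x \<le> M"
  shows "\<phi> b \<le> \<phi> a + (b - a) * M"
proof -
  have "\<phi> b - b * M \<le> \<phi> a - a * M"
  proof (rule DERIV_nonpos_imp_decreasing_open[OF \<open>a \<le> b\<close>])
    fix x assume "a < x" "x < b"
    then show "\<exists>y. ((\<lambda>x. \<phi> x - x * M) has_real_derivative y) (at x) \<and> y \<le> 0"
      using assms(3,4)[of x] by (auto intro!: derivative_eq_intros)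
  qed (use assms(2) in \<open>auto intro!: continuous_intros\<close>)
  then show ?thesis
    by (simp add: algebra_simps)
qed

locale radial_solution =
  fixes p R v0 s :: real and n :: nat and f g v v' :: "real \<Rightarrow> real"
  assumes p: "1 < p"
    and f_cont: "continuous_on {0..} f"
    and f_mono: "strict_mono_on {0..} f"
    and f0: "f 0 = 0"
    and g_lip: "\<exists>L. L-lipschitz_on {0..} g"
    and g_mono: "strict_mono_on {0..} g"
    and g0: "g 0 = 0"
    and R: "0 < R"
    and s: "s = 1 \<or> s = -1"
    and v_deriv: "\<And>r. r \<in> {0..R} \<Longrightarrow> (v has_real_derivative v' r) (at r within {0..R})"
    and v'_cont: "continuous_on {0..R} v'"
    and ode: "\<And>r. r \<in> {0<..<R} \<Longrightarrow>
        (pflux p n v' has_real_derivative r ^ (n - 1) * (f (v r) + s * g \<bar>v' r\<bar>)) (at r)"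
    and v0: "v 0 = v0" "0 < v0"
    and v'0: "v' 0 = 0"
begin

definition rhs :: "real \<Rightarrow> real" where
  "rhs t = f (v t) + s * g \<bar>v' t\<bar>"

lemma pflux_has_derivative:
  "t \<in> {0<..<R} \<Longrightarrow> (pflux p n v' has_real_derivative t ^ (n - 1) * rhs t) (at t)"
  using ode unfolding rhs_def .

lemma v_has_derivative:
  assumes "t \<in> {0<..<R}"
  shows "(v has_real_derivative v' t) (at t)"
proof -
  have "at t within {0..R} = at t"
    using assms by (intro at_within_interior) auto
  then show ?thesis
    using v_deriv[of t] assms by simp
qed

lemma continuous_on_v: "continuous_on {0..R} v"
  using v_deriv by (rule DERIV_continuous_on)

lemma f_less: "0 \<le> x \<Longrightarrow> x < y \<Longrightarrow> f x < f y"
  by (rule strict_mono_onD[OF f_mono]) auto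

lemma f_pos: "0 < x \<Longrightarrow> 0 < f x"
  using f_less[of 0 x] f0 by simp

lemma g_le: "0 \<le> x \<Longrightarrow> x \<le> y \<Longrightarrow> g x \<le> g y"
  using strict_mono_onD[OF g_mono, of x y] by (cases "x = y") auto

lemma g_pos: "0 < x \<Longrightarrow> 0 < g x"
  using g_mono g0 strict_mono_onD[of "{0..}" g 0 x] by auto

lemma rhs_continuous:
  assumes "t \<in> {0..R}" "0 < v t"
  shows "continuous (at t within {0..R}) rhs"
proof -
  obtain L where "L-lipschitz_on {0..} g"
    using g_lip by blast
  then have "continuous_on {0..R} (\<lambda>x. g \<bar>v' x\<bar>)"
    using continuous_on_rabs[OF v'_cont] by (rule continuous_on_compose2[OF lipschitz_on_continuous_on]) auto
  then have g_term: "continuous (at t within {0..R}) (\<lambda>x. g \<bar>v' x\<bar>)"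
    using assms(1) by (simp add: continuous_on_eq_continuous_within)
  have "isCont f (v t)"
    using continuous_on_interior[OF f_cont, of "v t"] assms(2) by simp
  moreover have "continuous (at t within {0..R}) v"
    using continuous_on_v assms(1) by (simp add: continuous_on_eq_continuous_within)
  ultimately have f_term: "continuous (at t within {0..R}) (\<lambda>x. f (v x))"
    by (rule continuous_within_compose3)
  show ?thesis
    unfolding rhs_def[abs_def] by (rule continuous_add[OF f_term continuous_mult[OF continuous_const g_term]])
qed

lemma v_less_if_v'_pos:
  assumes "0 \<le> a" "a < b" "b \<le> R" "\<And>t. t \<in> {a<..<b} \<Longrightarrow> 0 < v' t"
  shows "v a < v b"
proof (rule DERIV_pos_imp_increasing_open[OF \<open>a < b\<close>])
  fix x assume "a < x" "x < b"
  then show "\<exists>y. (v has_real_derivative y) (at x) \<and> 0 < y"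
    using assms v_has_derivative[of x] by auto
qed (use assms in \<open>auto intro: continuous_on_subset[OF continuous_on_v]\<close>)

lemma pflux_less_if_rhs_pos:
  assumes "0 \<le> a" "a < b" "b \<le> R" "\<And>t. t \<in> {a<..<b} \<Longrightarrow> 0 < rhs t"
  shows "pflux p n v' a < pflux p n v' b"
proof (rule DERIV_pos_imp_increasing_open[OF \<open>a < b\<close>])
  fix x assume "a < x" "x < b"
  then show "\<exists>y. (pflux p n v' has_real_derivative y) (at x) \<and> 0 < y"
    using assms pflux_has_derivative[of x] by (auto intro!: mult_pos_pos)
qed (use assms in \<open>auto intro: continuous_on_subset[OF continuous_on_pflux[OF p v'_cont]]\<close>)

lemma v'_sign_near_critical:
  assumes c: "c \<in> {0..<R}" "v' c = 0" "0 < v c"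
  shows "\<forall>\<^sub>F t in at_right c. 0 < v' t"
    and "0 < c \<Longrightarrow> \<forall>\<^sub>F t in at_left c. v' t < 0"
proof -
  have "0 < rhs c"
    using c g0 f_pos by (simp add: rhs_def)
  then have "\<forall>\<^sub>F t in at c within {0..R}. 0 < rhs t"
    using rhs_continuous[of c] c by (intro order_tendstoD(1)) (auto simp: continuous_within)
  then obtain d where d: "0 < d" "\<And>t. t \<in> {0..R} \<Longrightarrow> t \<noteq> c \<Longrightarrow> dist t c < d \<Longrightarrow> 0 < rhs t"
    unfolding eventually_at by auto
  define e where "e = min d (R - c)"
  have e: "0 < e" "c + e \<le> R"
    using d c by (auto simp: e_def)
  have rhs_pos: "0 < rhs t" if "t \<in> {c - e<..<c + e}" "t \<noteq> c" "0 \<le> t" for t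
    using d(2)[of t] that by (auto simp: e_def dist_real_def)
  have "0 < v' t" if "t \<in> {c<..<c + e}" for t
  proof -
    have "pflux p n v' c < pflux p n v' t"
      using that c e by (intro pflux_less_if_rhs_pos rhs_pos) auto
    then show ?thesis
      using pflux_pos_iff[of t] pflux_eq_0[of v' c] that c by auto
  qed
  then show "\<forall>\<^sub>F t in at_right c. 0 < v' t"
    using eventually_at_right_real[of c "c + e"] e by (auto elim: eventually_mono)
  show "\<forall>\<^sub>F t in at_left c. v' t < 0" if "0 < c"
  proof -
    have "v' t < 0" if "t \<in> {max 0 (c - e)<..<c}" for t
    proof -
      have "pflux p n v' t < pflux p n v' c"
        using that c e by (intro pflux_less_if_rhs_pos rhs_pos) auto
      then show ?thesis
        using pflux_neg_iff[of t] pflux_eq_0[of v' c] that c by auto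
    qed
    then show ?thesis
      using eventually_at_left_real[of "max 0 (c - e)" c] e \<open>0 < c\<close> by (auto elim: eventually_mono)
  qed
qed

lemma v'_pos:
  assumes t: "t \<in> {0<..<R}"
  shows "0 < v' t"
proof (rule ccontr)
  assume "\<not> 0 < v' t"
  obtain b where b: "0 < b" "\<And>x. x \<in> {0<..<b} \<Longrightarrow> 0 < v' x"
    using v'_sign_near_critical(1)[of 0] R v'0 v0 unfolding eventually_at_right_field by auto
  define a where "a = min b t / 2"
  have a: "a \<in> {0<..<t}" "0 < v' a"
    using b t by (auto simp: a_def)
  have "continuous_on {a..t} v'"
    using a t by (auto intro: continuous_on_subset[OF v'_cont])
  then obtain c where c: "c \<in> {a<..t}" "v' c = 0" "\<And>x. x \<in> {a..<c} \<Longrightarrow> 0 < v' x"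
    using first_zero_real[of a t v'] a t \<open>\<not> 0 < v' t\<close> by auto
  have "0 < v' x" if "x \<in> {0<..<c}" for x
    using b(2)[of x] c(3)[of x] that by (cases "x < a") (auto simp: a_def)
  then have "v0 < v c"
    using v_less_if_v'_pos[of 0 c] c a t v0 by auto
  then have "\<forall>\<^sub>F x in at_left c. v' x < 0"
    using v'_sign_near_critical(2)[of c] c a t v0 by auto
  moreover have "\<forall>\<^sub>F x in at_left c. 0 < v' x"
    using eventually_at_left_real[of a c] c(1) by (auto elim!: eventually_mono intro: c(3))
  ultimately have "\<forall>\<^sub>F x in at_left c. False"
    by eventually_elim auto
  then show False
    by (simp add: trivial_limit_at_left_real)
qed

lemma v_gt_v0: "t \<in> {0<..<R} \<Longrightarrow> v0 < v t"
  using v_less_if_v'_pos[of 0 t] v'_pos v0 by auto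

text \<open>On \<open>(0, R)\<close> the flux equals \<open>r^(n-1) W\<close>, so dividing the equation by \<open>r^(n-1)\<close>
  gives \<open>W'\<close>.\<close>

definition W :: "real \<Rightarrow> real" where
  "W t = v' t powr (p - 1)"

definition W' :: "real \<Rightarrow> real" where
  "W' t = rhs t - real (n - 1) * W t / t"

definition v'' :: "real \<Rightarrow> real" where
  "v'' t = 1 / (p - 1) * W t powr (1 / (p - 1) - 1) * W' t"

lemma W_pos: "t \<in> {0<..<R} \<Longrightarrow> 0 < W t"
  using v'_pos[of t] by (simp add: W_def)

lemma pflux_eq_W: "t \<in> {0<..<R} \<Longrightarrow> pflux p n v' t = t ^ (n - 1) * W t"
  using v'_pos[of t] by (simp add: W_def pflux_eq_powr)

lemma W_has_derivative:
  assumes t: "t \<in> {0<..<R}"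
  shows "(W has_real_derivative W' t) (at t)"
proof -
  define m where "m = n - 1"
  have quotient: "((\<lambda>x. pflux p n v' x / x ^ m) has_real_derivative
      (t ^ m * rhs t * t ^ m - pflux p n v' t * (real m * t ^ (m - Suc 0))) / (t ^ m * t ^ m)) (at t)"
    using t by (intro DERIV_divide pflux_has_derivative[unfolded m_def[symmetric]] DERIV_pow) auto
  have W'_eq: "W' t = rhs t - real m * W t / t"
    by (simp add: W'_def m_def)
  have pflux_eq: "pflux p n v' t = t ^ m * W t"
    using pflux_eq_W[OF t] by (simp add: m_def)
  have "(t ^ m * rhs t * t ^ m - pflux p n v' t * (real m * t ^ (m - Suc 0))) / (t ^ m * t ^ m) = W' t"
  proof (cases m)
    case 0
    then show ?thesis
      by (simp add: W'_eq)
  next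
    case (Suc j)
    then show ?thesis
      using t by (simp add: W'_eq pflux_eq field_simps)
  qed
  moreover have "pflux p n v' x / x ^ m = W x" if "x \<in> {0<..<R}" for x
    using that by (simp add: pflux_eq_W m_def)
  ultimately show ?thesis
    using has_field_derivative_transform_within_open[OF quotient, of "{0<..<R}" W] t by auto
qed

lemma v'_eq_W_powr: "t \<in> {0<..<R} \<Longrightarrow> v' t = W t powr (1 / (p - 1))"
  using v'_pos[of t] p by (simp add: W_def powr_powr)

lemma v'_has_derivative:
  assumes t: "t \<in> {0<..<R}"
  shows "(v' has_real_derivative v'' t) (at t)"
proof -
  have "((\<lambda>x. W x powr (1 / (p - 1))) has_real_derivative v'' t) (at t)"
    using DERIV_fun_powr[OF W_has_derivative[OF t] W_pos[OF t], of "1 / (p - 1)"]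
    by (simp add: v''_def)
  then show ?thesis
    using has_field_derivative_transform_within_open[OF _ _ t, of _ _ v'] v'_eq_W_powr by auto
qed

lemma v''_sign:
  assumes t: "t \<in> {0<..<R}"
  shows "0 \<le> v'' t \<longleftrightarrow> 0 \<le> W' t" and "v'' t \<le> 0 \<longleftrightarrow> W' t \<le> 0"
proof -
  have c: "0 < 1 / (p - 1) * W t powr (1 / (p - 1) - 1)"
    using W_pos[OF t] p by simp
  show "0 \<le> v'' t \<longleftrightarrow> 0 \<le> W' t"
    using mult_le_cancel_left_pos[OF c, of 0 "W' t"] unfolding v''_def by (simp only: mult_zero_right)
  show "v'' t \<le> 0 \<longleftrightarrow> W' t \<le> 0"
    using mult_le_cancel_left_pos[OF c, of "W' t" 0] unfolding v''_def by (simp only: mult_zero_right)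
qed

lemma continuous_on_W': "continuous_on {0<..<R} W'"
proof (intro continuous_at_imp_continuous_on ballI)
  fix t assume t: "t \<in> {0<..<R}"
  have "continuous (at t within {0..R}) rhs"
    using rhs_continuous[of t] v_gt_v0[OF t] v0 t by auto
  then have "isCont rhs t"
    using at_within_interior[of t "{0..R}"] t by simp
  moreover have "isCont W t"
    using W_has_derivative[OF t] by (rule DERIV_isCont)
  ultimately show "isCont W' t"
    unfolding W'_def[abs_def] using t by (intro continuous_intros) auto
qed

lemma v'_antimono:
  assumes "0 \<le> a" "a \<le> b" "b < R" "\<And>x. x \<in> {a<..<b} \<Longrightarrow> W' x \<le> 0"
  shows "v' b \<le> v' a"
proof (rule DERIV_nonpos_imp_decreasing_open[OF \<open>a \<le> b\<close>])
  fix x assume "a < x" "x < b"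
  then show "\<exists>y. (v' has_real_derivative y) (at x) \<and> y \<le> 0"
    using assms v'_has_derivative[of x] v''_sign(2)[of x] by auto
qed (use assms in \<open>auto intro: continuous_on_subset[OF v'_cont]\<close>)

lemma W_antimono:
  assumes "0 < a" "a \<le> b" "b < R" "\<And>x. x \<in> {a<..<b} \<Longrightarrow> W' x \<le> 0"
  shows "W b \<le> W a"
  using v'_antimono[of a b] v'_pos[of b] assms p unfolding W_def by (intro powr_mono2) auto

lemma W'_nonneg_somewhere_before:
  assumes t: "t \<in> {0<..<R}"
  shows "\<exists>a \<in> {0<..<t}. 0 \<le> W' a"
proof (rule ccontr)
  assume "\<not> ?thesis"
  then have "v' t \<le> v' 0"
    using t by (intro v'_antimono) (auto simp: not_le intro: less_imp_le)
  then show False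
    using v'_pos[OF t] v'0 by simp
qed

lemma W'_lower_bound_right_of_zero:
  assumes r: "r \<in> {0<..<R}" and y: "y \<in> {r<..<R}" and "W' r = 0" and "W y \<le> W r"
  shows "f (v y) - f (v r) + s * (g (v' y) - g (v' r)) + real (n - 1) * W r * (1 / r - 1 / y) \<le> W' y"
proof -
  have "W' y = W' r + (f (v y) - f (v r)) + s * (g (v' y) - g (v' r))
      + real (n - 1) * (W r / r - W y / y)"
    using v'_pos[of r] v'_pos[of y] r y by (simp add: W'_def rhs_def algebra_simps)
  moreover have "W y / y \<le> W r / y"
    using assms(4) y r by (intro divide_right_mono) auto
  then have "W r * (1 / r - 1 / y) \<le> W r / r - W y / y"
    by (simp add: right_diff_distrib)
  then have "real (n - 1) * W r * (1 / r - 1 / y) \<le> real (n - 1) * (W r / r - W y / y)"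
    using mult_left_mono[of _ _ "real (n - 1)"] by (simp add: mult.assoc)
  ultimately show ?thesis
    using \<open>W' r = 0\<close> by linarith
qed

lemma W'_pos_right_of_zero_minus:
  assumes "s = -1" and r: "r \<in> {0<..<R}" and t: "t \<in> {r<..<R}" and "W' r = 0"
    and W'_nonpos: "\<And>x. x \<in> {r<..<t} \<Longrightarrow> W' x \<le> 0"
  shows "0 < W' t"
proof -
  have "f (v r) < f (v t)"
    using v_less_if_v'_pos[of r t] v'_pos v_gt_v0[OF r] v0 r t by (intro f_less) auto
  moreover have "g (v' t) \<le> g (v' r)"
    using v'_antimono[of r t] W'_nonpos v'_pos[of t] r t by (intro g_le) auto
  moreover have "0 \<le> real (n - 1) * W r * (1 / r - 1 / t)"
    using W_pos[OF r] r t by (intro mult_nonneg_nonneg) (auto simp: field_simps)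
  moreover have "W t \<le> W r"
    using W_antimono[of r t] W'_nonpos r t by auto
  then have "f (v t) - f (v r) - (g (v' t) - g (v' r)) + real (n - 1) * W r * (1 / r - 1 / t) \<le> W' t"
    using W'_lower_bound_right_of_zero[OF r t \<open>W' r = 0\<close>] \<open>s = -1\<close> by simp
  ultimately show ?thesis
    by linarith
qed

text \<open>Here \<open>\<phi>(y)\<close> bounds \<open>W'(y)\<close> from below; it vanishes at \<open>r\<close> and, as \<open>v''(r) = 0\<close>,
  has derivative \<open>(n-1) W(r) / r^2 > 0\<close> there.\<close>

lemma W'_pos_right_of_zero_plus:
  assumes "s = 1" "2 \<le> n" and r: "r \<in> {0<..<R}" and t: "t \<in> {r<..<R}" and "W' r = 0"
    and W'_nonpos: "\<And>x. x \<in> {r<..<t} \<Longrightarrow> W' x \<le> 0"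
  shows "\<exists>y \<in> {r<..<t}. 0 < W' y"
proof -
  obtain L where L: "L-lipschitz_on {0..} g"
    using g_lip by blast
  define \<phi> where "\<phi> y = real (n - 1) * W r * (1 / r - 1 / y) - L * (v' r - v' y)" for y
  have "(\<phi> has_real_derivative real (n - 1) * W r / r\<^sup>2 + L * v'' r) (at r)"
    unfolding \<phi>_def using r
    by (auto intro!: derivative_eq_intros v'_has_derivative[OF r] simp: power2_eq_square)
  moreover have "v'' r = 0"
    using \<open>W' r = 0\<close> by (simp add: v''_def)
  moreover have "0 < real (n - 1) * W r / r\<^sup>2"
    using assms(2) W_pos[OF r] r by simp
  ultimately obtain d where d: "0 < d" "\<And>h. 0 < h \<Longrightarrow> h < d \<Longrightarrow> \<phi> r < \<phi> (r + h)"
    using DERIV_pos_inc_right by fastforce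
  define h where "h = min (d / 2) ((t - r) / 2)"
  have "0 < h" "h < d" "h < t - r"
    using d t by (simp_all add: h_def min_less_iff_disj)
  define y where "y = r + h"
  have y: "y \<in> {r<..<t}" "\<phi> r < \<phi> y"
    using d(2) \<open>0 < h\<close> \<open>h < d\<close> \<open>h < t - r\<close> by (auto simp: y_def)
  have "v' y \<le> v' r" "W y \<le> W r"
    using v'_antimono[of r y] W_antimono[of r y] W'_nonpos y r t by auto
  have "dist (g (v' y)) (g (v' r)) \<le> L * dist (v' y) (v' r)"
    using v'_pos[of y] v'_pos[of r] y r t by (intro lipschitz_onD[OF L]) auto
  then have "- L * (v' r - v' y) \<le> g (v' y) - g (v' r)"
    using \<open>v' y \<le> v' r\<close> by (simp add: dist_real_def)
  moreover have "f (v r) < f (v y)"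
    using v_less_if_v'_pos[of r y] v'_pos v_gt_v0[OF r] v0 r y t by (intro f_less) auto
  moreover have "\<phi> r = 0"
    by (simp add: \<phi>_def)
  ultimately have "0 < W' y"
    using W'_lower_bound_right_of_zero[of r y] \<open>W' r = 0\<close> \<open>W y \<le> W r\<close> \<open>s = 1\<close> y r t
    unfolding \<phi>_def by auto
  then show ?thesis
    using y by blast
qed

lemma W'_nonneg:
  assumes t: "t \<in> {0<..<R}"
  shows "0 \<le> W' t"
proof (rule ccontr)
  assume "\<not> 0 \<le> W' t"
  then have "W' t < 0"
    by simp
  show False
  proof (cases "s = 1 \<and> n \<le> 1")
    case True
    have "W' t = f (v t) + g (v' t)"
      unfolding W'_def rhs_def using True v'_pos[OF t] by simp
    moreover have "0 < f (v t)" "0 < g (v' t)"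
      using f_pos g_pos v_gt_v0[OF t] v'_pos[OF t] v0 by auto
    ultimately show False
      using \<open>W' t < 0\<close> by simp
  next
    case False
    obtain a where "a \<in> {0<..<t}" "0 \<le> W' a"
      using W'_nonneg_somewhere_before[OF t] by blast
    moreover have "continuous_on {a..t} W'"
      using \<open>a \<in> {0<..<t}\<close> t by (auto intro: continuous_on_subset[OF continuous_on_W'])
    ultimately obtain r where r: "r \<in> {a..<t}" "W' r = 0" "\<And>x. x \<in> {r<..t} \<Longrightarrow> W' x < 0"
      using last_zero_real[of a t W'] \<open>W' t < 0\<close> by auto
    have r_t: "r \<in> {0<..<R}" "t \<in> {r<..<R}" and W'_nonpos: "\<And>x. x \<in> {r<..<t} \<Longrightarrow> W' x \<le> 0"
      using r \<open>a \<in> {0<..<t}\<close> t by (auto intro: less_imp_le)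
    have "\<exists>y \<in> {r<..t}. 0 < W' y"
    proof (cases "s = -1")
      case True
      then show ?thesis
        using W'_pos_right_of_zero_minus[OF True r_t r(2) W'_nonpos] r_t by auto
    next
      case False
      then have "s = 1" "2 \<le> n"
        using s \<open>\<not> (s = 1 \<and> n \<le> 1)\<close> by auto
      then show ?thesis
        using W'_pos_right_of_zero_plus[OF _ _ r_t r(2) W'_nonpos] by fastforce
    qed
    then show False
      using r(3) by force
  qed
qed

lemma v'_mono:
  assumes "0 \<le> a" "a \<le> b" "b < R"
  shows "v' a \<le> v' b"
proof (rule DERIV_nonneg_imp_increasing_open[OF \<open>a \<le> b\<close>])
  fix x assume "a < x" "x < b"
  then show "\<exists>y. (v' has_real_derivative y) (at x) \<and> 0 \<le> y"
    using assms v'_has_derivative[of x] v''_sign(1)[of x] W'_nonneg[of x] by auto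
qed (use assms in \<open>auto intro: continuous_on_subset[OF v'_cont]\<close>)

lemma v_le_v0_add_R_mult_v':
  assumes t: "t \<in> {0<..<R}"
  shows "v t \<le> v0 + R * v' t"
proof -
  have "v t \<le> v 0 + (t - 0) * v' t"
  proof (rule le_add_mult_if_deriv_le[where \<phi>' = v'])
    show "continuous_on {0..t} v"
      using t by (auto intro: continuous_on_subset[OF continuous_on_v])
  qed (use t v_has_derivative v'_mono in auto)
  also have "\<dots> \<le> v0 + R * v' t"
    using mult_right_mono[of t R "v' t"] t v'_pos[OF t] v0 by simp
  finally show ?thesis .
qed

end

theorem lemma2p2:
  fixes p R v0 s :: real and n :: nat
    and f g v v' :: "real \<Rightarrow> real"
  assumes p: "1 < p"
    and n: "n \<ge> 1"
    and f_cont: "continuous_on {0..} f"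
    and f_mono: "strict_mono_on {0..} f"
    and f0: "f 0 = 0"
    and g_lip: "\<exists>L. L-lipschitz_on {0..} g"
    and g_mono: "strict_mono_on {0..} g"
    and g0: "g 0 = 0"
    and R: "0 < R"
    and s: "s = 1 \<or> s = -1"
    and v_deriv: "\<And>r. r \<in> {0..R} \<Longrightarrow> (v has_real_derivative v' r) (at r within {0..R})"
    and v'_cont: "continuous_on {0..R} v'"
    and ode: "\<And>r. r \<in> {0<..<R} \<Longrightarrow>
        (pflux p n v' has_real_derivative r ^ (n - 1) * (f (v r) + s * g \<bar>v' r\<bar>)) (at r)"
    and v0: "v 0 = v0" "v0 > 0"
    and v'0: "v' 0 = 0"
  shows "\<forall>r \<in> {0<..<R}. v r > 0 \<and> v' r > 0
           \<and> (\<exists>d. (v' has_real_derivative d) (at r) \<and> d \<ge> 0)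
           \<and> v r \<le> v0 + R * v' r"
proof -
  interpret radial_solution p R v0 s n f g v v'
    by (unfold_locales; fact assms)
  show ?thesis
  proof (intro ballI conjI)
    fix r assume r: "r \<in> {0<..<R}"
    show "0 < v r"
      using v_gt_v0[OF r] v0 by simp
    show "0 < v' r"
      by (rule v'_pos[OF r])
    show "\<exists>d. (v' has_real_derivative d) (at r) \<and> 0 \<le> d"
      using v'_has_derivative[OF r] v''_sign(1)[OF r] W'_nonneg[OF r] by blast
    show "v r \<le> v0 + R * v' r"
      by (rule v_le_v0_add_R_mult_v'[OF r])
  qed
qed

end
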